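(* Let $N \ge 2$, let $0 \le z_1 < \dots < z_N < 1$, let $\alpha_1,\dots,\alpha_N>0$ with $\sum_i \alpha_i = 1$, and let $\mu = \sum_{i=1}^N \alpha_i \delta_{z_i}$ on $[0,1]$. If $\lambda$ is an eigenvalue of the $\mu$-Laplacian $\Delta^\mu$, then $\lambda \in \mathbb R$ and $$2 \min_{i \in \{1,\dots,N\}} B_{i,i} \le \lambda \le 0,$$ where $B_{i,i} = -\alpha_{i-1}^{-2} - \alpha_i^{-2}$ with the convention $\alpha_0 := \alpha_N$.
   Context: $\delta_z$ is the Dirac measure at $z$. $L^2_\mu$ is the space of $\mu$-a.e. classes of real square-integrable functions on $[0,1]$ with inner product $\langle f,g\rangle_\mu = \sum_{i=1}^N \alpha_i f(z_i)g(z_i)$. $\mathscr D^1_\mu$ is the set of functions $f$ on $[0,1]$ for which there is $f' \in L^2_\mu$ with $f(0)=f(1)$ and $f(x) = f(0) + \int \mathbf 1_{[0,x)} f'\,d\mu$ for all $x\in[0,1]$ (with $[0,0)=\emptyset$); then $\nabla^\mu f := f'$, explicitly $\nabla^\mu f(z_n) = (f(z_{n+1})-f(z_n))/\alpha_n$ for $n<N$ and $\nabla^\mu f(z_N) = (f(z_1)-f(z_N))/\alpha_N$. Every class of $L^2_\mu$ has a representative in $\mathscr D^1_\mu$. The energy form is $\mathcal E(f,g) = \langle \nabla^\mu f, \nabla^\mu g\rangle_\mu$. A function $f \in \mathscr D^1_\mu$ belongs to $\mathscr D^2_\mu$ if there is $h \in L^2_\mu$ with $\mathcal E(f,g) = -\langle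 h, g\rangle_\mu$ for all $g\in\mathscr D^1_\mu$, and then $\Delta^\mu f := h$. Writing $A$ for the $N\times N$ matrix of $\nabla^\mu$ acting on $(f(z_1),\dots,f(z_N))^\top$ (so $A_{n,n} = -\alpha_n^{-1}$, $A_{n,n+1} = \alpha_n^{-1}$ for $n<N$, $A_{N,N} = -\alpha_N^{-1}$, $A_{N,1} = \alpha_N^{-1}$, other entries $0$), the paper takes $B := -A^\top A$ as matrix representation of $\Delta^\mu$; its diagonal entries are $B_{i,i} = -\alpha_{i-1}^{-2}-\alpha_i^{-2}$ (indices mod $N$). *)

theory Defs
  imports Complex_Main "Jordan_Normal_Form.Char_Poly"
begin

text \<open>Indices are shifted by one: row/column i (0 \<le> i < N) corresponds to the atom z_(i+1),
  and alpha i is the weight of z_(i+1).\<close>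

text \<open>Matrix A of the discrete derivative nabla^mu acting on (f(z_1),...,f(z_N)).\<close>
definition grad_mat :: "nat \<Rightarrow> (nat \<Rightarrow> real) \<Rightarrow> real mat" where
  "grad_mat N alpha = mat N N (\<lambda>(i, j).
     (if j = i then - 1 / alpha i else 0) + (if j = Suc i mod N then 1 / alpha i else 0))"

definition lap_mat :: "nat \<Rightarrow> (nat \<Rightarrow> real) \<Rightarrow> real mat" where
  "lap_mat N alpha = - (transpose_mat (grad_mat N alpha) * grad_mat N alpha)"

end

theory Submission
  imports Defs
begin

(* B = -A^T A, so an eigenvector v of B satisfies lam |v|^2 = -|A v|^2: lam is real and nonpositive.
   Since (A v)_k = (v_(k+1) - v_k) / alpha_k cyclically, the bound |a - b|^2 <= 2 (|a|^2 + |b|^2)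
   followed by a cyclic shift of the first summand gives
   |A v|^2 <= 2 sum_j |v_j|^2 (alpha_(j-1)^-2 + alpha_j^-2) <= -2 (min_i B_ii) |v|^2. *)

lemma cscalar_prod_self_eq_sum_cmod:
  fixes v :: "complex vec"
  shows "v \<bullet>c v = complex_of_real (\<Sum>i<dim_vec v. (cmod (v $ i))\<^sup>2)"
  by (simp add: scalar_prod_def lessThan_atLeast0 complex_norm_square del: of_real_power)

lemma conjugate_mult_mat_vec_of_real:
  fixes G :: "real mat" and v :: "complex vec"
  assumes "v \<in> carrier_vec (dim_col G)"
  shows "conjugate (map_mat complex_of_real G *\<^sub>v v) = map_mat complex_of_real G *\<^sub>v conjugate v"
  using assms by (intro eq_vecI) (auto simp: scalar_prod_def sum_conjugate conjugate_dist_mul)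

lemma neg_gram_eigenvector_rayleigh:
  fixes G :: "real mat" and v :: "complex vec"
  defines "Gc \<equiv> map_mat complex_of_real G"
  assumes G: "G \<in> carrier_mat m n" and v: "v \<in> carrier_vec n"
    and eigen: "map_mat complex_of_real (- (transpose_mat G * G)) *\<^sub>v v = lam \<cdot>\<^sub>v v"
  shows "lam * (v \<bullet>c v) = - ((Gc *\<^sub>v v) \<bullet>c (Gc *\<^sub>v v))"
proof -
  have Gc: "Gc \<in> carrier_mat m n"
    using G by (simp add: Gc_def)
  have "map_mat complex_of_real (- (transpose_mat G * G)) = - (transpose_mat Gc * Gc)"
    using G by (auto simp: Gc_def of_real_hom.mat_hom_mult[symmetric] map_mat_transpose)
  with eigen Gc v have "lam \<cdot>\<^sub>v v = - (transpose_mat Gc *\<^sub>v (Gc *\<^sub>v v))"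
    by auto
  moreover have "lam * (v \<bullet>c v) = (lam \<cdot>\<^sub>v v) \<bullet> conjugate v"
    using v by simp
  ultimately have "lam * (v \<bullet>c v) = - ((transpose_mat Gc *\<^sub>v (Gc *\<^sub>v v)) \<bullet> conjugate v)"
    using Gc v by simp
  also have "\<dots> = - ((Gc *\<^sub>v v) \<bullet> (Gc *\<^sub>v conjugate v))"
    using Gc v by (simp add: transpose_vec_mult_scalar)
  also have "\<dots> = - ((Gc *\<^sub>v v) \<bullet>c (Gc *\<^sub>v v))"
    using G v by (simp add: Gc_def conjugate_mult_mat_vec_of_real)
  finally show ?thesis .
qed

lemma norm_diff_power2_le:
  fixes a b :: "'a :: real_normed_vector"
  shows "(norm (a - b))\<^sup>2 \<le> 2 * ((norm a)\<^sup>2 + (norm b)\<^sup>2)"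
proof -
  have "(norm (a - b))\<^sup>2 \<le> (norm a + norm b)\<^sup>2"
    by (simp add: power_mono norm_triangle_ineq4)
  also have "\<dots> \<le> 2 * ((norm a)\<^sup>2 + (norm b)\<^sup>2)"
    using sum_squares_ge_zero[of "norm a - norm b" 0] by (simp add: power2_eq_square algebra_simps)
  finally show ?thesis .
qed

lemma pred_mod_Suc_mod:
  assumes "k < (N :: nat)"
  shows "(Suc k mod N + N - 1) mod N = k"
proof (cases "Suc k = N")
  case False
  with assms have "Suc k mod N + N - 1 = k + N"
    by simp
  with assms show ?thesis
    by simp
qed (use assms in auto)

lemma Suc_mod_pred_mod:
  assumes "j < (N :: nat)"
  shows "Suc ((j + N - 1) mod N) mod N = j"
proof (cases j)
  case (Suc i)
  with assms have "(j + N - 1) mod N = i"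
    by simp
  with Suc assms show ?thesis
    by simp
qed (use assms in auto)

lemma sum_rotate_mod:
  fixes f :: "nat \<Rightarrow> nat \<Rightarrow> 'a :: comm_monoid_add"
  shows "(\<Sum>k<N. f (Suc k mod N) k) = (\<Sum>j<N. f j ((j + N - 1) mod N))"
  by (rule sum.reindex_bij_witness[where i="\<lambda>j. (j + N - 1) mod N" and j="\<lambda>k. Suc k mod N"])
    (auto simp: pred_mod_Suc_mod Suc_mod_pred_mod simp del: One_nat_def)

lemma sum_cyclic_diff_power2_le:
  fixes x :: "nat \<Rightarrow> complex" and alpha :: "nat \<Rightarrow> real"
  shows "(\<Sum>k<N. (cmod ((x (Suc k mod N) - x k) / alpha k))\<^sup>2)
    \<le> 2 * (\<Sum>j<N. (cmod (x j))\<^sup>2 * (1 / (alpha ((j + N - 1) mod N))\<^sup>2 + 1 / (alpha j)\<^sup>2))"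
proof -
  have "(\<Sum>k<N. (cmod ((x (Suc k mod N) - x k) / alpha k))\<^sup>2)
      \<le> (\<Sum>k<N. 2 * ((cmod (x (Suc k mod N)))\<^sup>2 / (alpha k)\<^sup>2 + (cmod (x k))\<^sup>2 / (alpha k)\<^sup>2))"
  proof (rule sum_mono)
    fix k
    have "(cmod ((x (Suc k mod N) - x k) / alpha k))\<^sup>2 = (cmod (x (Suc k mod N) - x k))\<^sup>2 / (alpha k)\<^sup>2"
      by (simp add: norm_divide power_divide)
    also have "\<dots> \<le> 2 * ((cmod (x (Suc k mod N)))\<^sup>2 + (cmod (x k))\<^sup>2) / (alpha k)\<^sup>2"
      by (rule divide_right_mono[OF norm_diff_power2_le zero_le_power2])
    finally show "(cmod ((x (Suc k mod N) - x k) / alpha k))\<^sup>2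
        \<le> 2 * ((cmod (x (Suc k mod N)))\<^sup>2 / (alpha k)\<^sup>2 + (cmod (x k))\<^sup>2 / (alpha k)\<^sup>2)"
      by (simp add: add_divide_distrib)
  qed
  also have "\<dots> = 2 * ((\<Sum>k<N. (cmod (x (Suc k mod N)))\<^sup>2 * (1 / (alpha k)\<^sup>2))
      + (\<Sum>j<N. (cmod (x j))\<^sup>2 * (1 / (alpha j)\<^sup>2)))"
    by (simp add: sum_distrib_left sum.distrib)
  also have "\<dots> = 2 * (\<Sum>j<N. (cmod (x j))\<^sup>2 * (1 / (alpha ((j + N - 1) mod N))\<^sup>2 + 1 / (alpha j)\<^sup>2))"
    by (simp only: sum_rotate_mod[where f="\<lambda>j k. (cmod (x j))\<^sup>2 * (1 / (alpha k)\<^sup>2)"]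
        distrib_left sum.distrib)
  finally show ?thesis .
qed

lemma sum_cyclic_diff_power2_le_Min:
  fixes x :: "nat \<Rightarrow> complex" and alpha :: "nat \<Rightarrow> real"
  shows "(\<Sum>k<N. (cmod ((x (Suc k mod N) - x k) / alpha k))\<^sup>2)
    \<le> - 2 * Min {- (1 / (alpha ((i + N - 1) mod N))\<^sup>2) - 1 / (alpha i)\<^sup>2 | i. i < N}
        * (\<Sum>j<N. (cmod (x j))\<^sup>2)"
proof -
  define Bmin where "Bmin = Min {- (1 / (alpha ((i + N - 1) mod N))\<^sup>2) - 1 / (alpha i)\<^sup>2 | i. i < N}"
  have weight_le: "1 / (alpha ((j + N - 1) mod N))\<^sup>2 + 1 / (alpha j)\<^sup>2 \<le> - Bmin" if "j < N" for j
  proof -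
    have "Bmin \<le> - (1 / (alpha ((j + N - 1) mod N))\<^sup>2) - 1 / (alpha j)\<^sup>2"
      unfolding Bmin_def by (rule Min_le) (use that in auto)
    then show ?thesis
      by simp
  qed
  have "(\<Sum>k<N. (cmod ((x (Suc k mod N) - x k) / alpha k))\<^sup>2)
      \<le> 2 * (\<Sum>j<N. (cmod (x j))\<^sup>2 * (1 / (alpha ((j + N - 1) mod N))\<^sup>2 + 1 / (alpha j)\<^sup>2))"
    by (rule sum_cyclic_diff_power2_le)
  also have "\<dots> \<le> 2 * (\<Sum>j<N. (cmod (x j))\<^sup>2 * - Bmin)"
    by (intro mult_left_mono sum_mono) (simp_all add: weight_le del: One_nat_def)
  also have "\<dots> = - 2 * Bmin * (\<Sum>j<N. (cmod (x j))\<^sup>2)"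
    by (simp add: sum_distrib_left sum_distrib_right algebra_simps)
  finally show ?thesis
    unfolding Bmin_def .
qed

lemma grad_mat_carrier: "grad_mat N alpha \<in> carrier_mat N N"
  by (simp add: grad_mat_def)

lemma grad_mat_mult_vec_index:
  fixes v :: "complex vec"
  assumes k: "k < N" and v: "v \<in> carrier_vec N"
  shows "(map_mat complex_of_real (grad_mat N alpha) *\<^sub>v v) $ k = (v $ (Suc k mod N) - v $ k) / alpha k"
proof -
  have "(map_mat complex_of_real (grad_mat N alpha) *\<^sub>v v) $ k
      = (\<Sum>j<N. (if j = k then - v $ k / alpha k else 0)
          + (if j = Suc k mod N then v $ (Suc k mod N) / alpha k else 0))"
    using k v by (auto simp: grad_mat_def scalar_prod_def lessThan_atLeast0 intro!: sum.cong)
  also have "\<dots> = (v $ (Suc k mod N) - v $ k) / alpha k"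
    using k by (simp add: sum.distrib diff_divide_distrib)
  finally show ?thesis .
qed

lemma lap_mat_eigenvector_rayleigh:
  fixes v :: "complex vec"
  assumes v: "v \<in> carrier_vec N"
    and eigen: "map_mat complex_of_real (lap_mat N alpha) *\<^sub>v v = lam \<cdot>\<^sub>v v"
  shows "lam * (\<Sum>i<N. (cmod (v $ i))\<^sup>2)
    = - (\<Sum>k<N. (cmod ((v $ (Suc k mod N) - v $ k) / alpha k))\<^sup>2)"
proof -
  let ?Gc = "map_mat complex_of_real (grad_mat N alpha)"
  note G = grad_mat_carrier[of N alpha]
  have "(?Gc *\<^sub>v v) \<bullet>c (?Gc *\<^sub>v v)
      = complex_of_real (\<Sum>k<N. (cmod ((v $ (Suc k mod N) - v $ k) / alpha k))\<^sup>2)"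
    unfolding cscalar_prod_self_eq_sum_cmod using G v
    by (intro arg_cong[where f = complex_of_real] sum.cong) 
      (simp_all add: grad_mat_mult_vec_index del: index_mult_mat_vec)
  moreover have "lam * (v \<bullet>c v) = - ((?Gc *\<^sub>v v) \<bullet>c (?Gc *\<^sub>v v))"
    using neg_gram_eigenvector_rayleigh[OF G v] eigen by (simp add: lap_mat_def)
  ultimately show ?thesis
    using v by (simp add: cscalar_prod_self_eq_sum_cmod)
qed

theorem proposition3p1:
  fixes N :: nat and z alpha :: "nat \<Rightarrow> real" and lam :: complex
  assumes "N \<ge> 2"
    and "0 \<le> z 0" and "\<And>i. Suc i < N \<Longrightarrow> z i < z (Suc i)" and "z (N - 1) < 1"
    and "\<And>i. i < N \<Longrightarrow> alpha i > 0"
    and "(\<Sum>i<N. alpha i) = 1"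
    and "eigenvalue (map_mat complex_of_real (lap_mat N alpha)) lam"
  shows "lam \<in> \<real> \<and>
    2 * Min {- (1 / (alpha ((i + N - 1) mod N))\<^sup>2) - 1 / (alpha i)\<^sup>2 | i. i < N} \<le> Re lam \<and>
    Re lam \<le> 0"
proof -
  let ?M = "map_mat complex_of_real (lap_mat N alpha)"
  have "?M \<in> carrier_mat N N"
    using grad_mat_carrier[of N alpha] by (simp add: lap_mat_def)
  with assms(7) obtain v where v: "v \<in> carrier_vec N" "v \<noteq> 0\<^sub>v N" "?M *\<^sub>v v = lam \<cdot>\<^sub>v v"
    unfolding eigenvalue_def eigenvector_def by auto
  define S where "S = (\<Sum>i<N. (cmod (v $ i))\<^sup>2)"
  define T where "T = (\<Sum>k<N. (cmod ((v $ (Suc k mod N) - v $ k) / alpha k))\<^sup>2)"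
  define Bmin where "Bmin = Min {- (1 / (alpha ((i + N - 1) mod N))\<^sup>2) - 1 / (alpha i)\<^sup>2 | i. i < N}"
  have rayleigh: "lam * S = - T"
    using lap_mat_eigenvector_rayleigh[OF v(1,3)] by (simp add: S_def T_def)
  have "S > 0"
    using conjugate_square_greater_0_vec[OF v(1)] v
    by (simp add: cscalar_prod_self_eq_sum_cmod S_def less_complex_def)
  have "T \<ge> 0"
    by (simp add: T_def sum_nonneg)
  have "T \<le> - 2 * Bmin * S"
    unfolding T_def S_def Bmin_def by (rule sum_cyclic_diff_power2_le_Min)
  then have "2 * Bmin \<le> - T / S" and "- T / S \<le> 0"
    using \<open>S > 0\<close> \<open>T \<ge> 0\<close> by (simp_all add: field_simps)
  moreover have "lam = complex_of_real (- T / S)"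
    using rayleigh \<open>S > 0\<close> by (simp add: field_simps)
  ultimately show ?thesis
    unfolding Bmin_def by simp
qed

end
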